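(* Let $\mathfrak{N}$ be a pseudo-Euclidean 2-step nilpotent Lie algebra with center $\mathfrak{Z}$, let $(e_1,\ldots,e_p)$ be any basis of $\mathfrak{Z}$ with associated structure endomorphisms $(J_1,\ldots,J_p)$, and define the endomorphisms $$\mathcal{J}^-=\frac12\sum_{i,j=1}^p\langle e_i,e_j\rangle\, J_i\circ J_j,\qquad \mathcal{J}^+(u)=-\frac14\sum_{i,j=1}^p\langle e_i,u\rangle\,\mathrm{tr}(J_i\circ J_j)\,e_j,$$ and the bilinear forms $\mathfrak{r}^\pm(u,v)=\langle\mathcal{J}^\pm u,v\rangle$. Then the Ricci curvature $\mathfrak{r}$ of $\mathfrak{N}$ satisfies $\mathfrak{r}=\mathfrak{r}^++\mathfrak{r}^-$, and the scalar curvature $\mathfrak{s}$ satisfies $\mathfrak{s}=\frac12\mathrm{tr}\,\mathcal{J}^-=-\mathrm{tr}\,\mathcal{J}^+$.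
   Context: A pseudo-Euclidean Lie algebra is a finite-dimensional real Lie algebra $\mathfrak{g}$ with a nondegenerate symmetric bilinear form $\langle\cdot,\cdot\rangle$. Its Levi-Civita product $\mathcal{D}$ is defined by $2\langle\mathcal{D}_uv,w\rangle=\langle[u,v],w\rangle+\langle[w,u],v\rangle+\langle[w,v],u\rangle$; its curvature is $\mathcal{R}(u,v)w=\mathcal{D}_{[u,v]}w-\mathcal{D}_u\mathcal{D}_vw+\mathcal{D}_v\mathcal{D}_uw$; its Ricci curvature is $\mathfrak{r}(u,v)=\mathrm{tr}(w\mapsto\mathcal{R}(u,w)v)$; writing $\mathfrak{r}(u,v)=\langle\mathcal{J}u,v\rangle$, the scalar curvature is $\mathfrak{s}=\mathrm{tr}\,\mathcal{J}$. A Lie algebra $\mathfrak{N}$ is 2-step nilpotent if $[\mathfrak{N},\mathfrak{N}]\ne0$ and $[\mathfrak{N},\mathfrak{N}]\subset\mathfrak{Z}$ (the center). Given a basis $(e_1,\ldots,e_p)$ of $\mathfrak{Z}$, the structure endomorphisms $J_i$ are the $\langle\cdot,\cdot\rangle$-skew-symmetric endomorphisms with $[u,v]=\sum_i\langle J_iu,v\rangle e_i$; $\mathcal{J}^\pm$ do not depend on the choice of basis. *)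

theory Defs
  imports "HOL-Analysis.Analysis"
begin

text \<open>The underlying finite-dimensional real vector space is a type 'a of class
euclidean_space; its built-in inner product is used only to define the trace of
an endomorphism (sum of diagonal entries w.r.t. the orthonormal Basis), never as
the metric. The pseudo-Euclidean metric is the separate form g.\<close>

definition trace :: "('a::euclidean_space \<Rightarrow> 'a) \<Rightarrow> real" where
  "trace f = (\<Sum>b\<in>Basis. (f b) \<bullet> b)"

definition lie_algebra :: "('a::euclidean_space \<Rightarrow> 'a \<Rightarrow> 'a) \<Rightarrow> bool" where
  "lie_algebra L \<longleftrightarrow> bilinear L \<and> (\<forall>u. L u u = 0) \<and>
     (\<forall>u v w. L u (L v w) + L v (L w u) + L w (L u v) = 0)"

definition pseudo_euclidean_form :: "('a::euclidean_space \<Rightarrow> 'a \<Rightarrow> real) \<Rightarrow> bool" where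
  "pseudo_euclidean_form g \<longleftrightarrow> bilinear g \<and> (\<forall>u v. g u v = g v u) \<and>
     (\<forall>u. (\<forall>v. g u v = 0) \<longrightarrow> u = 0)"

definition center :: "('a \<Rightarrow> 'a \<Rightarrow> 'a::euclidean_space) \<Rightarrow> 'a set" where
  "center L = {z. \<forall>u. L z u = 0}"

definition two_step_nilpotent :: "('a::euclidean_space \<Rightarrow> 'a \<Rightarrow> 'a) \<Rightarrow> bool" where
  "two_step_nilpotent L \<longleftrightarrow> (\<exists>u v. L u v \<noteq> 0) \<and> (\<forall>u v. L u v \<in> center L)"

definition LC :: "('a \<Rightarrow> 'a \<Rightarrow> 'a::euclidean_space) \<Rightarrow> ('a \<Rightarrow> 'a \<Rightarrow> real) \<Rightarrow> 'a \<Rightarrow> 'a \<Rightarrow> 'a" where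
  "LC L g u v = (THE x. \<forall>w. 2 * g x w = g (L u v) w + g (L w u) v + g (L w v) u)"

definition curv :: "('a \<Rightarrow> 'a \<Rightarrow> 'a::euclidean_space) \<Rightarrow> ('a \<Rightarrow> 'a \<Rightarrow> real) \<Rightarrow> 'a \<Rightarrow> 'a \<Rightarrow> 'a \<Rightarrow> 'a" where
  "curv L g u v w = LC L g (L u v) w - LC L g u (LC L g v w) + LC L g v (LC L g u w)"

definition ricci :: "('a \<Rightarrow> 'a \<Rightarrow> 'a::euclidean_space) \<Rightarrow> ('a \<Rightarrow> 'a \<Rightarrow> real) \<Rightarrow> 'a \<Rightarrow> 'a \<Rightarrow> real" where
  "ricci L g u v = trace (\<lambda>w. curv L g u w v)"

definition ricci_op :: "('a \<Rightarrow> 'a \<Rightarrow> 'a::euclidean_space) \<Rightarrow> ('a \<Rightarrow> 'a \<Rightarrow> real) \<Rightarrow> 'a \<Rightarrow> 'a" where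
  "ricci_op L g u = (THE x. \<forall>v. g x v = ricci L g u v)"

definition scalar_curv :: "('a \<Rightarrow> 'a \<Rightarrow> 'a::euclidean_space) \<Rightarrow> ('a \<Rightarrow> 'a \<Rightarrow> real) \<Rightarrow> real" where
  "scalar_curv L g = trace (ricci_op L g)"

definition Jminus :: "('a \<Rightarrow> 'a \<Rightarrow> real) \<Rightarrow> nat \<Rightarrow> (nat \<Rightarrow> 'a::euclidean_space) \<Rightarrow> (nat \<Rightarrow> 'a \<Rightarrow> 'a) \<Rightarrow> 'a \<Rightarrow> 'a" where
  "Jminus g p e J u = (1/2) *\<^sub>R (\<Sum>i<p. \<Sum>j<p. g (e i) (e j) *\<^sub>R J i (J j u))"

definition Jplus :: "('a \<Rightarrow> 'a \<Rightarrow> real) \<Rightarrow> nat \<Rightarrow> (nat \<Rightarrow> 'a::euclidean_space) \<Rightarrow> (nat \<Rightarrow> 'a \<Rightarrow> 'a) \<Rightarrow> 'a \<Rightarrow> 'a" where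
  "Jplus g p e J u = (-1/4) *\<^sub>R (\<Sum>i<p. \<Sum>j<p. (g (e i) u * trace (J i \<circ> J j)) *\<^sub>R e j)"

end

theory Submission
  imports Defs
begin

text \<open>The Levi-Civita product of a 2-step nilpotent Lie algebra is explicit,
  \<open>D\<^sub>u v = (1/2) ([u,v] - j(v) u - j(u) v)\<close>, where \<open>j(z) = \<Sum>\<^sub>i \<langle>e\<^sub>i,z\<rangle> J\<^sub>i\<close> is the skew-symmetric
  operator with \<open>\<langle>j(z) u, v\<rangle> = \<langle>z, [u,v]\<rangle>\<close>. Expanding the curvature, each term of the Ricci
  trace is either a rank-one trace, \<open>tr(w \<mapsto> \<phi>(w) c) = \<phi>(c)\<close>, or the trace of a skew-symmetric
  endomorphism, which vanishes because the form is symmetric and nondegenerate. What survives is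
  \<open>\<langle>J\<^sup>+ u, v\<rangle> + \<langle>J\<^sup>- u, v\<rangle>\<close>, and tracing both operators gives the same double sum
  \<open>\<Sum>\<^sub>i\<^sub>j \<langle>e\<^sub>i,e\<^sub>j\<rangle> tr(J\<^sub>i J\<^sub>j)\<close>, with factor \<open>-1/4\<close> for \<open>J\<^sup>+\<close> and \<open>1/2\<close> for \<open>J\<^sup>-\<close>.\<close>

lemma trace_add: "trace (\<lambda>w. f w + h w) = trace f + trace h"
  by (simp add: trace_def inner_add_left sum.distrib)

lemma trace_diff: "trace (\<lambda>w. f w - h w) = trace f - trace h"
  by (simp add: trace_def inner_diff_left sum_subtractf)

lemma trace_neg: "trace (\<lambda>w. - f w) = - trace f"
  by (simp add: trace_def sum_negf)

lemma trace_scaleR: "trace (\<lambda>w. c *\<^sub>R f w) = c * trace f"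
  by (simp add: trace_def sum_distrib_left)

lemma trace_sum: "trace (\<lambda>w. \<Sum>i\<in>I. f i w) = (\<Sum>i\<in>I. trace (f i))"
  by (simp add: trace_def inner_sum_left sum.swap[of _ Basis])

lemma trace_rank_one:
  assumes "linear \<phi>"
  shows "trace (\<lambda>w. \<phi> w *\<^sub>R c) = \<phi> c"
proof -
  have "trace (\<lambda>w. \<phi> w *\<^sub>R c) = (\<Sum>b\<in>Basis. \<phi> ((c \<bullet> b) *\<^sub>R b))"
    by (simp add: trace_def linear_scale[OF assms] inner_commute mult.commute)
  also have "\<dots> = \<phi> c"
    by (simp add: linear_sum[OF assms, symmetric] euclidean_representation)
  finally show ?thesis .
qed

locale pseudo_euclidean =
  fixes g :: "'a::euclidean_space \<Rightarrow> 'a \<Rightarrow> real"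
  assumes pseudo_euclidean: "pseudo_euclidean_form g"
begin

lemma g_sym: "g u v = g v u"
  using pseudo_euclidean by (simp add: pseudo_euclidean_form_def)

lemma g_eqI: "(\<And>w. g x w = g y w) \<Longrightarrow> x = y"
proof -
  have lin: "linear (\<lambda>x. g x w)" for w
    using pseudo_euclidean by (simp add: pseudo_euclidean_form_def bilinear_def)
  assume "\<And>w. g x w = g y w"
  then have "\<forall>w. g (x - y) w = 0" by (simp add: linear_diff[OF lin])
  then have "x - y = 0" using pseudo_euclidean unfolding pseudo_euclidean_form_def by blast
  then show "x = y" by simp
qed

lemma linear_g_left: "linear (\<lambda>x. g x y)"
  and linear_g_right: "linear (\<lambda>y. g x y)"
  using pseudo_euclidean by (simp_all add: pseudo_euclidean_form_def bilinear_def)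

lemma g_simps [simp]:
  "g (x + y) z = g x z + g y z" "g z (x + y) = g z x + g z y"
  "g (x - y) z = g x z - g y z" "g z (x - y) = g z x - g z y"
  "g (- x) z = - g x z" "g z (- x) = - g z x"
  "g (c *\<^sub>R x) z = c * g x z" "g z (c *\<^sub>R x) = c * g z x"
  "g 0 z = 0" "g z 0 = 0"
  "g (\<Sum>i\<in>I. f i) z = (\<Sum>i\<in>I. g (f i) z)" "g z (\<Sum>i\<in>I. f i) = (\<Sum>i\<in>I. g z (f i))"
  using linear_add[OF linear_g_left] linear_add[OF linear_g_right]
    linear_diff[OF linear_g_left] linear_diff[OF linear_g_right]
    linear_neg[OF linear_g_left] linear_neg[OF linear_g_right]
    linear_scale[OF linear_g_left] linear_scale[OF linear_g_right]
    linear_0[OF linear_g_left] linear_0[OF linear_g_right]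
    linear_sum[OF linear_g_left] linear_sum[OF linear_g_right]
  by auto

lemma linear_g_left_comp: "linear f \<Longrightarrow> linear (\<lambda>w. g (f w) y)"
  using linear_compose[of f "\<lambda>x. g x y"] linear_g_left by (simp add: o_def)

lemma linear_g_right_comp: "linear f \<Longrightarrow> linear (\<lambda>w. g x (f w))"
  using linear_compose[of f "g x"] linear_g_right by (simp add: o_def)

text \<open>Nondegeneracy makes \<open>x \<mapsto> g x\<close> an injective, hence surjective, linear map onto the
  dual space, which is identified with the space itself through the inner product.\<close>
lemma represents_inner: "\<exists>x. \<forall>y. g x y = b \<bullet> y"
proof -
  define G where "G x = (\<Sum>c\<in>Basis. g x c *\<^sub>R c)" for x
  have G: "g x y = G x \<bullet> y" for x y
  proof -
    have "g x y = g x (\<Sum>c\<in>Basis. (y \<bullet> c) *\<^sub>R c)" by (simp add: euclidean_representation)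
    then show ?thesis by (simp add: G_def inner_sum_left inner_commute[of y] mult.commute)
  qed
  have "linear G"
    unfolding G_def by (rule linearI) (simp_all add: scaleR_add_left sum.distrib scaleR_sum_right)
  moreover have "inj G"
    by (rule injI, rule g_eqI) (simp add: G)
  ultimately have "surj G" by (simp add: linear_injective_imp_surjective)
  then obtain x where "G x = b" by (metis surjE)
  then show ?thesis by (auto simp: G)
qed

lemma trace_skew_eq_0:
  assumes skew: "\<And>u v. g (f u) v = - g u (f v)"
  shows "trace f = 0"
proof -
  obtain d where d: "\<And>b y. g (d b) y = b \<bullet> y"
    using represents_inner by metis
  define t where "t b c = (d b \<bullet> c) * g c (f b)" for b c
  have "trace f = (\<Sum>b\<in>Basis. g (d b) (f b))"
    by (simp add: trace_def d inner_commute)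
  also have "\<dots> = (\<Sum>b\<in>Basis. g (\<Sum>c\<in>Basis. (d b \<bullet> c) *\<^sub>R c) (f b))"
    by (simp only: euclidean_representation)
  also have "\<dots> = (\<Sum>b\<in>Basis. \<Sum>c\<in>Basis. t b c)"
    by (simp add: t_def)
  finally have tr: "trace f = (\<Sum>b\<in>Basis. \<Sum>c\<in>Basis. t b c)" .
  have d_sym: "d b \<bullet> c = d c \<bullet> b" for b c
    using d[of b "d c"] d[of c "d b"] g_sym[of "d b" "d c"] by (simp add: inner_commute)
  have skew': "g c (f b) = - g b (f c)" for b c
    using skew[of b c] g_sym[of c "f b"] by simp
  have "t b c = - t c b" for b c
    unfolding t_def using d_sym[of b c] skew'[of c b] by simp
  then have "(\<Sum>b\<in>Basis. \<Sum>c\<in>Basis. t b c) = (\<Sum>b\<in>Basis. \<Sum>c\<in>Basis. - t c b)"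
    by (intro sum.cong refl)
  also have "\<dots> = - (\<Sum>c\<in>Basis. \<Sum>b\<in>Basis. t c b)"
    by (subst sum.swap) (simp add: sum_negf)
  finally show ?thesis using tr by simp
qed

lemma LC_eqI:
  assumes "\<And>w. 2 * g x w = g (L u v) w + g (L w u) v + g (L w v) u"
  shows "LC L g u v = x"
  unfolding LC_def
proof (rule the_equality)
  fix y assume y: "\<forall>w. 2 * g y w = g (L u v) w + g (L w u) v + g (L w v) u"
  show "y = x"
  proof (rule g_eqI)
    show "g y w = g x w" for w using y[rule_format, of w] assms[of w] by linarith
  qed
qed (use assms in blast)

lemma ricci_op_eqI:
  assumes "\<And>v. g x v = ricci L g u v"
  shows "ricci_op L g u = x"
  unfolding ricci_op_def
proof (rule the_equality)
  fix y assume "\<forall>v. g y v = ricci L g u v"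
  then show "y = x" by (intro g_eqI) (simp add: assms)
qed (use assms in blast)

end

text \<open>Neither the Jacobi identity nor nilpotency is assumed: the curvature computation only
  uses that the \<open>J\<^sub>i\<close> are skew and annihilate the \<open>e\<^sub>k\<close>.\<close>
locale two_step_structure = pseudo_euclidean g
  for g :: "'a::euclidean_space \<Rightarrow> 'a \<Rightarrow> real" +
  fixes L :: "'a \<Rightarrow> 'a \<Rightarrow> 'a" and p :: nat and e :: "nat \<Rightarrow> 'a" and J :: "nat \<Rightarrow> 'a \<Rightarrow> 'a"
  assumes linear_J: "linear (J i)"
    and J_skew: "g (J i u) v = - g u (J i v)"
    and J_e: "J i (e k) = 0"
    and L_eq: "L u v = (\<Sum>i<p. g (J i u) v *\<^sub>R e i)"
begin

lemma J_simps [simp]: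
  "J i (x + y) = J i x + J i y" "J i (x - y) = J i x - J i y" "J i (- x) = - J i x"
  "J i (c *\<^sub>R x) = c *\<^sub>R J i x" "J i 0 = 0" "J i (\<Sum>k\<in>I. f k) = (\<Sum>k\<in>I. J i (f k))"
  using linear_add[OF linear_J] linear_diff[OF linear_J] linear_neg[OF linear_J]
    linear_scale[OF linear_J] linear_0[OF linear_J] linear_sum[OF linear_J] by auto

lemma g_e_J [simp]: "g (e i) (J j y) = 0"
  using J_skew[of j "e i" y] J_e by simp

lemma L_swap: "L w u = - L u w"
proof -
  have "g (J i w) u = - g (J i u) w" for i
    using J_skew[of i w u] g_sym[of w "J i u"] by simp
  then show ?thesis by (simp add: L_eq sum_negf[symmetric])
qed

lemma linear_L_left: "linear (\<lambda>u. L u v)"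
  and linear_L_right: "linear (L u)"
  by (rule linearI; simp add: L_eq scaleR_add_left sum.distrib scaleR_sum_right)+

lemma L_simps [simp]:
  "L u (x + y) = L u x + L u y" "L u (x - y) = L u x - L u y" "L u (- x) = - L u x"
  "L u (c *\<^sub>R x) = c *\<^sub>R L u x"
  using linear_add[OF linear_L_right] linear_diff[OF linear_L_right]
    linear_neg[OF linear_L_right] linear_scale[OF linear_L_right] by auto

lemma J_L [simp]: "J i (L a b) = 0"
  by (simp add: L_eq J_e)

lemma L_L_left [simp]: "L (L a b) c = 0"
  by (simp only: L_eq[of "L a b"] J_L) simp

lemma L_L_right [simp]: "L c (L a b) = 0"
  using L_L_left L_swap by (metis neg_equal_0_iff_equal)

text \<open>Kaplan's \<open>j\<close>-map, evaluated on arbitrary vectors rather than only on the center;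
  \<open>g_jmap\<close> is its defining property.\<close>
definition jmap :: "'a \<Rightarrow> 'a \<Rightarrow> 'a" where
  "jmap z u = (\<Sum>i<p. g (e i) z *\<^sub>R J i u)"

lemma g_jmap: "g (jmap z u) v = g z (L u v)"
  by (simp add: jmap_def L_eq g_sym[of "e _"] mult.commute)

lemma linear_jmap_left: "linear (\<lambda>z. jmap z u)"
  and linear_jmap_right: "linear (jmap z)"
  by (rule linearI; simp add: jmap_def scaleR_add_left scaleR_add_right sum.distrib
      scaleR_sum_right mult.commute)+

lemma jmap_simps [simp]:
  "jmap u (x + y) = jmap u x + jmap u y" "jmap u (x - y) = jmap u x - jmap u y"
  "jmap u (- x) = - jmap u x" "jmap u (c *\<^sub>R x) = c *\<^sub>R jmap u x"
  "jmap (x + y) u = jmap x u + jmap y u" "jmap (x - y) u = jmap x u - jmap y u"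
  "jmap (- x) u = - jmap x u" "jmap (c *\<^sub>R x) u = c *\<^sub>R jmap x u"
  using linear_add[OF linear_jmap_right] linear_diff[OF linear_jmap_right]
    linear_neg[OF linear_jmap_right] linear_scale[OF linear_jmap_right]
    linear_add[OF linear_jmap_left] linear_diff[OF linear_jmap_left]
    linear_neg[OF linear_jmap_left] linear_scale[OF linear_jmap_left] by auto

lemma jmap_L [simp]: "jmap c (L a b) = 0"
  by (simp add: jmap_def)

lemma jmap_e [simp]: "jmap c (e k) = 0"
  by (simp add: jmap_def J_e)

lemma g_e_jmap [simp]: "g (e i) (jmap a b) = 0"
  by (simp add: jmap_def)

lemma jmap_jmap_left [simp]: "jmap (jmap a b) c = 0"
  by (simp add: jmap_def)

lemma jmap_skew: "g (jmap z u) v = - g u (jmap z v)"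
  using L_swap[of u v] g_sym[of u "jmap z v"] by (simp add: g_jmap)

definition levi_civita :: "'a \<Rightarrow> 'a \<Rightarrow> 'a" where
  "levi_civita u v = (1/2) *\<^sub>R (L u v - jmap v u - jmap u v)"

lemma LC_eq_levi_civita: "LC L g u v = levi_civita u v"
proof (rule LC_eqI)
  fix w
  have "g (jmap v u) w = - g (L w u) v"
    using L_swap[of u w] g_sym[of v "L w u"] by (simp add: g_jmap)
  moreover have "g (jmap u v) w = - g (L w v) u"
    using L_swap[of v w] g_sym[of u "L w v"] by (simp add: g_jmap)
  ultimately show "2 * g (levi_civita u v) w = g (L u v) w + g (L w u) v + g (L w v) u"
    by (simp add: levi_civita_def)
qed

lemma curv_eq:
  "curv L g u w v =
     (-(1/2)) *\<^sub>R jmap (L u w) v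
   - (1/4) *\<^sub>R (- L u (jmap v w) - L u (jmap w v) - jmap (L w v) u
                    + jmap u (jmap v w) + jmap u (jmap w v))
   + (1/2) *\<^sub>R (L w (levi_civita u v) - jmap (levi_civita u v) w - jmap w (levi_civita u v))"
proof -
  have "levi_civita (L u w) v = (-(1/2)) *\<^sub>R jmap (L u w) v"
    by (simp add: levi_civita_def)
  moreover have "levi_civita u (levi_civita w v) = (1/4) *\<^sub>R (- L u (jmap v w) - L u (jmap w v)
      - jmap (L w v) u + jmap u (jmap v w) + jmap u (jmap w v))"
    by (simp add: levi_civita_def algebra_simps)
  ultimately show ?thesis
    by (simp only: curv_def LC_eq_levi_civita levi_civita_def[of w "levi_civita u v"])
qed

lemma trace_jmap_L: "trace (\<lambda>w. jmap (L u w) v) = (\<Sum>i<p. g (e i) (L u (J i v)))"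
  by (simp add: jmap_def trace_sum trace_rank_one linear_g_right_comp linear_L_right)

lemma trace_L_jmap_right: "trace (\<lambda>w. L u (jmap v w)) = 0"
  by (simp add: L_eq[of u] trace_sum trace_rank_one linear_g_right_comp linear_jmap_right)

lemma trace_L_jmap_add_trace_jmap_L_eq_0:
  "trace (\<lambda>w. L u (jmap w v)) + trace (\<lambda>w. jmap (L w v) u) = 0"
proof -
  have "trace (\<lambda>w. L u (jmap w v)) = (\<Sum>i<p. g (J i u) (jmap (e i) v))"
    by (simp add: L_eq[of u] trace_sum trace_rank_one linear_g_right_comp linear_jmap_left)
  also have "\<dots> = - (\<Sum>i<p. g (e i) (L (J i u) v))"
  proof -
    have "g (J i u) (jmap (e i) v) = - g (e i) (L (J i u) v)" for i
      using g_sym[of "J i u"] L_swap[of v "J i u"] by (simp add: g_jmap)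
    then show ?thesis by (simp add: sum_negf)
  qed
  also have "(\<Sum>i<p. g (e i) (L (J i u) v)) = trace (\<lambda>w. jmap (L w v) u)"
    by (simp add: jmap_def[of "L _ v"] trace_sum trace_rank_one linear_g_right_comp linear_L_left)
  finally show ?thesis by simp
qed

lemma trace_jmap_jmap_right:
  "trace (\<lambda>w. jmap u (jmap v w)) = (\<Sum>i<p. \<Sum>j<p. (g (e i) u * g (e j) v) * trace (J i \<circ> J j))"
  by (simp add: jmap_def trace_sum trace_scaleR o_def sum_distrib_left mult.assoc)

lemma trace_jmap_jmap_left: "trace (\<lambda>w. jmap u (jmap w v)) = 0"
  by (simp add: jmap_def[of _ v] linear_sum[OF linear_jmap_right] trace_sum trace_rank_one
      linear_g_right)

lemma trace_L_left: "trace (\<lambda>w. L w y) = 0"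
  by (simp add: L_eq trace_sum trace_rank_one linear_g_left_comp linear_J J_e)

lemma trace_jmap_right: "trace (jmap y) = 0"
  by (rule trace_skew_eq_0) (rule jmap_skew)

lemma trace_jmap_left: "trace (\<lambda>w. jmap w y) = 0"
  by (simp add: jmap_def trace_sum trace_rank_one linear_g_right)

lemma ricci_eq_sums:
  "ricci L g u v = -(1/2) * (\<Sum>i<p. g (e i) (L u (J i v)))
     - (1/4) * (\<Sum>i<p. \<Sum>j<p. (g (e i) u * g (e j) v) * trace (J i \<circ> J j))"
proof -
  have "ricci L g u v =
     (-(1/2)) * trace (\<lambda>w. jmap (L u w) v)
   - (1/4) * (- trace (\<lambda>w. L u (jmap v w)) - trace (\<lambda>w. L u (jmap w v))
        - trace (\<lambda>w. jmap (L w v) u) + trace (\<lambda>w. jmap u (jmap v w)) + trace (\<lambda>w. jmap u (jmap w v)))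
   + (1/2) * (trace (\<lambda>w. L w (levi_civita u v)) - trace (jmap (levi_civita u v))
        - trace (\<lambda>w. jmap w (levi_civita u v)))"
    unfolding ricci_def curv_eq by (simp only: trace_add trace_diff trace_scaleR trace_neg)
  then show ?thesis
    using trace_L_jmap_add_trace_jmap_L_eq_0[of u v]
    by (simp add: trace_jmap_L trace_L_jmap_right trace_jmap_jmap_right trace_jmap_jmap_left
        trace_L_left trace_jmap_right trace_jmap_left algebra_simps)
qed

lemma ricci_eq: "ricci L g u v = g (Jplus g p e J u) v + g (Jminus g p e J u) v"
proof -
  have "g (e i) (L u (J i v)) = - (\<Sum>k<p. g (e i) (e k) * g (J i (J k u)) v)" for i
    by (simp add: L_eq J_skew sum_negf[symmetric] mult.commute)
  then show ?thesis
    unfolding ricci_eq_sums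
    by (simp add: Jplus_def Jminus_def sum_negf sum_distrib_left algebra_simps)
qed

lemma ricci_op_eq: "ricci_op L g u = Jplus g p e J u + Jminus g p e J u"
  by (rule ricci_op_eqI) (simp add: ricci_eq)

lemma trace_Jplus:
  "trace (Jplus g p e J) = -(1/4) * (\<Sum>i<p. \<Sum>j<p. g (e i) (e j) * trace (J i \<circ> J j))"
proof -
  have lin: "linear (\<lambda>u. g (e i) u * c)" for i c
    using linear_g_right by (simp add: linear_iff algebra_simps)
  show ?thesis
    unfolding Jplus_def by (simp add: trace_neg trace_scaleR trace_sum trace_rank_one[OF lin])
qed

lemma trace_Jminus:
  "trace (Jminus g p e J) = (1/2) * (\<Sum>i<p. \<Sum>j<p. g (e i) (e j) * trace (J i \<circ> J j))"
  unfolding Jminus_def by (simp add: trace_scaleR trace_sum o_def)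

lemma scalar_curv_eq:
  "scalar_curv L g = (1/2) * trace (Jminus g p e J) \<and> scalar_curv L g = - trace (Jplus g p e J)"
proof -
  have "scalar_curv L g = trace (Jplus g p e J) + trace (Jminus g p e J)"
    unfolding scalar_curv_def ricci_op_eq by (rule trace_add)
  then show ?thesis by (simp add: trace_Jplus trace_Jminus)
qed

end

lemma independent_image_coeff_eq_0:
  assumes "finite I" "inj_on e I" "independent (e ` I)"
    and "(\<Sum>i\<in>I. c i *\<^sub>R e i) = 0" "i \<in> I"
  shows "c i = 0"
proof -
  define u where "u v = c (inv_into I e v)" for v
  have "(\<Sum>v\<in>e ` I. u v *\<^sub>R v) = (\<Sum>i\<in>I. c i *\<^sub>R e i)"
    using assms(2) by (simp add: sum.reindex u_def)
  then have "u (e i) = 0"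
    using independentD[OF assms(3) finite_imageI[OF assms(1)] subset_refl] assms(4,5) by simp
  then show ?thesis using assms(2,5) by (simp add: u_def)
qed

lemma structure_endomorphism_center_eq_0:
  fixes g :: "'a::euclidean_space \<Rightarrow> 'a \<Rightarrow> real" and e :: "nat \<Rightarrow> 'a"
  assumes "pseudo_euclidean_form g" "inj_on e {..<p}" "independent (e ` {..<p})"
    and "\<And>u v. L u v = (\<Sum>i<p. g (J i u) v *\<^sub>R e i)"
    and "z \<in> center L" "i < p"
  shows "J i z = 0"
proof -
  interpret pseudo_euclidean g by (rule pseudo_euclidean.intro) fact
  have sum_eq_0: "(\<Sum>i<p. g (J i z) v *\<^sub>R e i) = 0" for v
    using assms(4,5) by (simp add: center_def)
  have "g (J i z) v = g 0 v" for v
    using independent_image_coeff_eq_0[OF finite_lessThan assms(2,3), of "\<lambda>i. g (J i z) v" i]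
      assms(6) sum_eq_0 by simp
  then show ?thesis by (rule g_eqI)
qed

theorem mainTheorem3:
  fixes L :: "'a::euclidean_space \<Rightarrow> 'a \<Rightarrow> 'a"
    and g :: "'a \<Rightarrow> 'a \<Rightarrow> real"
    and p :: nat and e :: "nat \<Rightarrow> 'a" and J :: "nat \<Rightarrow> 'a \<Rightarrow> 'a"
  assumes "lie_algebra L"
    and "pseudo_euclidean_form g"
    and "two_step_nilpotent L"
    and "inj_on e {..<p}" and "independent (e ` {..<p})"
    and "span (e ` {..<p}) = center L"
    and "\<And>i. i < p \<Longrightarrow> linear (J i)"
    and "\<And>i u v. i < p \<Longrightarrow> g (J i u) v = - g u (J i v)"
    and "\<And>u v. L u v = (\<Sum>i<p. g (J i u) v *\<^sub>R e i)"
  shows "(\<forall>u v. ricci L g u v = g (Jplus g p e J u) v + g (Jminus g p e J u) v)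
    \<and> scalar_curv L g = (1/2) * trace (Jminus g p e J)
    \<and> scalar_curv L g = - trace (Jplus g p e J)"
proof -
  interpret pseudo_euclidean g by (rule pseudo_euclidean.intro) fact
  have J_e: "J i (e k) = 0" if "i < p" "k < p" for i k
  proof (rule structure_endomorphism_center_eq_0[OF assms(2,4,5,9) _ \<open>i < p\<close>])
    show "e k \<in> center L"
      using span_base[of "e k" "e ` {..<p}"] assms(6) \<open>k < p\<close> by simp
  qed
  \<comment> \<open>Outside \<open>{..<p}\<close> nothing is known about \<open>e\<close> and \<open>J\<close>; truncating them to \<open>0\<close>
    there changes neither \<open>L\<close> nor \<open>Jplus\<close>, \<open>Jminus\<close>.\<close>
  define e0 where "e0 k = (if k < p then e k else 0)" for k
  define J0 where "J0 i = (if i < p then J i else (\<lambda>x. 0))" for i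
  interpret two_step_structure g L p e0 J0
  proof (intro two_step_structure.intro two_step_structure_axioms.intro pseudo_euclidean_axioms)
    show "linear (J0 i)" for i by (simp add: J0_def assms(7) linear_zero)
    show "g (J0 i u) v = - g u (J0 i v)" for i u v by (simp add: J0_def assms(8))
    show "J0 i (e0 k) = 0" for i k by (simp add: J0_def e0_def J_e linear_0[OF assms(7)])
    show "L u v = (\<Sum>i<p. g (J0 i u) v *\<^sub>R e0 i)" for u v by (simp add: assms(9) J0_def e0_def)
  qed
  have "Jplus g p e J = Jplus g p e0 J0" "Jminus g p e J = Jminus g p e0 J0"
    by (simp_all add: fun_eq_iff Jplus_def Jminus_def J0_def e0_def)
  then show ?thesis using ricci_eq scalar_curv_eq by simp
qed

end
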